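(* Let $P$ be a finite graded bowtie-free poset of rank $n$ with $\hat0,\hat1$ and a good $\mathcal{H}_n(0)$ action $U_1,\dots,U_{n-1}$, let $\mathfrak m_0$ be the unique maximal chain with empty descent set, and let $\mathfrak m$ be any maximal chain. If $U_{i_1}\cdots U_{i_r}(\mathfrak m)=\mathfrak m_0$ and $U_{j_1}\cdots U_{j_s}(\mathfrak m)=\mathfrak m_0$ are both restless, then $s_{i_1}s_{i_2}\cdots s_{i_r}=s_{j_1}s_{j_2}\cdots s_{j_s}$ as permutations of $[n]$.
   Context: $s_i$ is the adjacent transposition $(i\ i+1)$ of $[n]$. Bowtie-free: no distinct $a,b,c,d$ with $a$ and $b$ each covering both $c$ and $d$. A good $\mathcal{H}_n(0)$ action is a family $U_1,\dots,U_{n-1}$ of maps on the set $\mathcal{M}(P)$ of maximal chains with: $U_i(\mathfrak m)$ agrees with $\mathfrak m$ except possibly at rank $i$; $U_i^2=U_i$; $U_iU_j=U_jU_i$ for $|i-j|\ge2$; $U_iU_{i+1}U_i=U_{i+1}U_iU_{i+1}$; and $\omega F_P=\mathrm{ch}(\chi_P)$ ($\chi_P$ the character of the $\mathcal{H}_n(0)$-module $\mathbb{C}\mathcal{M}(P)$ with $T_i=-U_i$, $F_P$ Ehrenborg's flag quasisymmetric function $\sum x_1^{\mathrm{rk}(t_0,t_1)}\cdots x_k^{\mathrm{rk}(t_{k-1},t_k)}$ over multichains $\hat0=t_0\le\cdots\le t_{k-1}<t_k=\hat1$, $\omega(L_{S,n})=L_{[n-1]\setminus S,n}$ on Gessel's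 fundamental quasisymmetric functions, $\mathrm{ch}(\chi_S)=L_{S,n}$ for the one-dimensional characters $\chi_S$: $T_i\mapsto-1$ for $i\in S$, $0$ otherwise). The descent set of $\mathfrak m$ is $\{i:U_i(\mathfrak m)\ne\mathfrak m\}$; such a $P$ has exactly one maximal chain $\mathfrak m_0$ with empty descent set. An expression $U_{i_1}\cdots U_{i_r}(\mathfrak m)=\mathfrak m'$ is restless if $U_{i_r}(\mathfrak m)\ne\mathfrak m$ (when $r\ge1$) and $U_{i_j}\cdots U_{i_r}(\mathfrak m)\ne U_{i_{j+1}}\cdots U_{i_r}(\mathfrak m)$ for $j=1,\dots,r-1$. *)

theory Defs
  imports "HOL-Library.FuncSet" "HOL-Combinatorics.Transposition"
begin

definition covers_in :: "'a::order set \<Rightarrow> 'a \<Rightarrow> 'a \<Rightarrow> bool" where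
  "covers_in P x y \<longleftrightarrow> x \<in> P \<and> y \<in> P \<and> x < y \<and> \<not> (\<exists>z\<in>P. x < z \<and> z < y)"
  (* "y covers x" *)

definition sat_chain :: "'a::order set \<Rightarrow> nat \<Rightarrow> (nat \<Rightarrow> 'a) \<Rightarrow> 'a \<Rightarrow> 'a \<Rightarrow> bool" where
  "sat_chain P k c x y \<longleftrightarrow> c 0 = x \<and> c k = y \<and> (\<forall>j<k. covers_in P (c j) (c (Suc j)))"

definition graded_bounded :: "'a::order set \<Rightarrow> 'a \<Rightarrow> 'a \<Rightarrow> nat \<Rightarrow> bool" where
  "graded_bounded P bz tp n \<longleftrightarrow> finite P \<and> bz \<in> P \<and> tp \<in> P \<and>
     (\<forall>x\<in>P. bz \<le> x \<and> x \<le> tp) \<and>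
     (\<forall>k c. sat_chain P k c bz tp \<longrightarrow> k = n)"

definition prank :: "'a::order set \<Rightarrow> 'a \<Rightarrow> 'a \<Rightarrow> nat" where
  "prank P bz x = Max {k. \<exists>c. sat_chain P k c bz x}"

definition bowtie_free :: "'a::order set \<Rightarrow> bool" where
  "bowtie_free P \<longleftrightarrow> \<not> (\<exists>a\<in>P. \<exists>b\<in>P. \<exists>c\<in>P. \<exists>d\<in>P.
      distinct [a, b, c, d] \<and> covers_in P c a \<and> covers_in P d a \<and>
      covers_in P c b \<and> covers_in P d b)"

(* maximal chains, indexed by rank: m j is the element of rank j *)
definition maxchains :: "'a::order set \<Rightarrow> 'a \<Rightarrow> 'a \<Rightarrow> nat \<Rightarrow> (nat \<Rightarrow> 'a) set" where
  "maxchains P bz tp n = {m \<in> {0..n} \<rightarrow>\<^sub>E P. sat_chain P n m bz tp}"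

(* U_{i_1} ... U_{i_r} (m) for the word [i_1,...,i_r] *)
definition applyw :: "(nat \<Rightarrow> 'b \<Rightarrow> 'b) \<Rightarrow> nat list \<Rightarrow> 'b \<Rightarrow> 'b" where
  "applyw U w = foldr (\<lambda>i f. U i \<circ> f) w id"

definition descents :: "nat \<Rightarrow> (nat \<Rightarrow> 'b \<Rightarrow> 'b) \<Rightarrow> 'b \<Rightarrow> nat set" where
  "descents n U m = {i \<in> {1..<n}. U i m \<noteq> m}"

definition restless :: "(nat \<Rightarrow> 'b \<Rightarrow> 'b) \<Rightarrow> nat list \<Rightarrow> 'b \<Rightarrow> bool" where
  "restless U w m \<longleftrightarrow> (\<forall>k<length w. U (w ! k) (applyw U (drop (Suc k) w) m) \<noteq> applyw U (drop (Suc k) w) m)"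

definition hecke_action :: "'a::order set \<Rightarrow> 'a \<Rightarrow> 'a \<Rightarrow> nat \<Rightarrow> (nat \<Rightarrow> (nat \<Rightarrow> 'a) \<Rightarrow> (nat \<Rightarrow> 'a)) \<Rightarrow> bool" where
  "hecke_action P bz tp n U \<longleftrightarrow> (let M = maxchains P bz tp n in
     (\<forall>i\<in>{1..<n}. \<forall>m\<in>M. U i m \<in> M \<and> (\<forall>j. j \<noteq> i \<longrightarrow> U i m j = m j) \<and> U i (U i m) = U i m) \<and>
     (\<forall>i\<in>{1..<n}. \<forall>j\<in>{1..<n}. \<forall>m\<in>M. (i + 2 \<le> j \<or> j + 2 \<le> i) \<longrightarrow> U i (U j m) = U j (U i m)) \<and>
     (\<forall>i. i \<in> {1..<n} \<and> Suc i \<in> {1..<n} \<longrightarrow>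
        (\<forall>m\<in>M. U i (U (Suc i) (U i m)) = U (Suc i) (U i (U (Suc i) m)))))"

(* character of C M(P) with T_i = -U_i, evaluated on T_{i_1}...T_{i_r}:
   trace of (-1)^r times the permutation-type matrix of U_{i_1}...U_{i_r} *)
definition charP :: "'a::order set \<Rightarrow> 'a \<Rightarrow> 'a \<Rightarrow> nat \<Rightarrow> (nat \<Rightarrow> (nat \<Rightarrow> 'a) \<Rightarrow> (nat \<Rightarrow> 'a)) \<Rightarrow> nat list \<Rightarrow> int" where
  "charP P bz tp n U w = (-1) ^ length w * int (card {m \<in> maxchains P bz tp n. applyw U w m = m})"

definition chiS :: "nat set \<Rightarrow> nat list \<Rightarrow> int" where
  "chiS S w = (\<Prod>i\<leftarrow>w. if i \<in> S then -1 else 0)"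

(* ---------- quasisymmetric functions (homogeneous), as coefficient functions
   on exponent vectors a : nat => nat, a v = exponent of x_v (v >= 1) ---------- *)

definition gesselL :: "nat \<Rightarrow> nat set \<Rightarrow> (nat \<Rightarrow> nat) \<Rightarrow> int" where
  "gesselL n S a = int (card {ix \<in> {1..n} \<rightarrow>\<^sub>E UNIV.
      (\<forall>j\<in>{1..n}. 1 \<le> ix j) \<and>
      (\<forall>j\<in>{1..<n}. ix j \<le> ix (Suc j) \<and> (j \<in> S \<longrightarrow> ix j < ix (Suc j))) \<and>
      (\<forall>v. a v = card {j \<in> {1..n}. ix j = v})})"

(* Ehrenborg's flag quasisymmetric function F_P: sum over multichains
   0 = t_0 <= ... <= t_{k-1} < t_k = 1 of x_1^{rk(t_0,t_1)} ... x_k^{rk(t_{k-1},t_k)} *)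
definition ehrenborgF :: "'a::order set \<Rightarrow> 'a \<Rightarrow> 'a \<Rightarrow> (nat \<Rightarrow> nat) \<Rightarrow> int" where
  "ehrenborgF P bz tp a = int (card {(k, t). k \<ge> 1 \<and> t \<in> {0..k} \<rightarrow>\<^sub>E P \<and>
      t 0 = bz \<and> t k = tp \<and> t (k - 1) < t k \<and>
      (\<forall>j\<in>{1..k}. t (j - 1) \<le> t j) \<and>
      (\<forall>v. a v = (if 1 \<le> v \<and> v \<le> k then prank P bz (t v) - prank P bz (t (v - 1)) else 0))})"

definition Lcomb :: "nat \<Rightarrow> (nat set \<Rightarrow> int) \<Rightarrow> (nat \<Rightarrow> nat) \<Rightarrow> int" where
  "Lcomb n d a = (\<Sum>S\<in>Pow {1..<n}. d S * gesselL n S a)"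

(* omega f = g, where omega(L_{S,n}) = L_{[n-1]-S,n} extended linearly *)
definition is_omega :: "nat \<Rightarrow> ((nat \<Rightarrow> nat) \<Rightarrow> int) \<Rightarrow> ((nat \<Rightarrow> nat) \<Rightarrow> int) \<Rightarrow> bool" where
  "is_omega n f g \<longleftrightarrow> (\<exists>d. f = Lcomb n d \<and> g = Lcomb n (\<lambda>S. d ({1..<n} - S)))"

(* ch(chi) = g, where ch is the linear map with ch(chi_S) = L_{S,n} *)
definition is_ch :: "nat \<Rightarrow> (nat list \<Rightarrow> int) \<Rightarrow> ((nat \<Rightarrow> nat) \<Rightarrow> int) \<Rightarrow> bool" where
  "is_ch n chi g \<longleftrightarrow> (\<exists>c. (\<forall>w\<in>lists {1..<n}. chi w = (\<Sum>S\<in>Pow {1..<n}. c S * chiS S w)) \<and>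
       g = Lcomb n c)"

definition good_action :: "'a::order set \<Rightarrow> 'a \<Rightarrow> 'a \<Rightarrow> nat \<Rightarrow> (nat \<Rightarrow> (nat \<Rightarrow> 'a) \<Rightarrow> (nat \<Rightarrow> 'a)) \<Rightarrow> bool" where
  "good_action P bz tp n U \<longleftrightarrow> hecke_action P bz tp n U \<and>
     (\<exists>g. is_omega n (ehrenborgF P bz tp) g \<and> is_ch n (charP P bz tp n U) g)"

(* s_{i_1} s_{i_2} ... s_{i_r} as a permutation (of [n]; it fixes everything else) *)
definition sperm :: "nat list \<Rightarrow> nat \<Rightarrow> nat" where
  "sperm w = foldr (\<lambda>i p. transpose i (Suc i) \<circ> p) w id"

end

theory Submission
  imports Defs
begin

text \<open>Restless words are the paths in the graph on maximal chains with an edge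
  \<open>x \<rightarrow> U\<^sub>i x\<close> whenever \<open>U\<^sub>i x \<noteq> x\<close>. By the character condition the number of fixed points of
  \<open>U\<^sub>w\<close> depends only on the set of letters of \<open>w\<close>, which rules out cycles, so this finite graph is
  terminating. It is also locally confluent with equal permutations on both sides: distant
  letters commute, and for adjacent letters both sides of the braid relation are restless paths
  because \<open>P\<close> is bowtie-free. Newman's lemma, run with the permutation attached to each path,
  then shows that all restless paths from \<open>m\<close> to a descent-free chain carry the same permutation.\<close>

lemma applyw_Nil [simp]: "applyw U [] x = x"
  by (simp add: applyw_def)

lemma applyw_Cons [simp]: "applyw U (i # w) x = U i (applyw U w x)"
  by (simp add: applyw_def)

lemma applyw_append: "applyw U (u @ v) x = applyw U u (applyw U v x)"
  by (induction u) auto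

lemma applyw_fixed_if_letters_fixed: "\<forall>j\<in>set w. U j x = x \<Longrightarrow> applyw U w x = x"
  by (induction w) auto

lemma restless_Nil [simp]: "restless U [] x"
  by (simp add: restless_def)

lemma restless_Cons:
  "restless U (i # w) x \<longleftrightarrow> U i (applyw U w x) \<noteq> applyw U w x \<and> restless U w x"
  by (simp add: restless_def All_less_Suc2)

lemma restless_append: "restless U (u @ v) x \<longleftrightarrow> restless U v x \<and> restless U u (applyw U v x)"
  by (induction u) (auto simp: restless_Cons applyw_append)

lemma restless_snoc: "restless U (u @ [i]) x \<longleftrightarrow> U i x \<noteq> x \<and> restless U u (U i x)"
  by (simp add: restless_append restless_Cons)

lemma descents_empty_iff: "descents n U x = {} \<longleftrightarrow> (\<forall>i\<in>{1..<n}. U i x = x)"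
  by (auto simp: descents_def)

lemma restless_from_descent_free:
  assumes "descents n U x = {}" "w \<in> lists {1..<n}" "restless U w x"
  shows "w = []"
proof (cases w rule: rev_cases)
  case (snoc u i)
  then show ?thesis using assms by (auto simp: descents_empty_iff restless_snoc)
qed

lemma sperm_Nil [simp]: "sperm [] = id"
  by (simp add: sperm_def)

lemma sperm_Cons [simp]: "sperm (i # w) = transpose i (Suc i) \<circ> sperm w"
  by (simp add: sperm_def)

lemma sperm_append: "sperm (u @ v) = sperm u \<circ> sperm v"
  by (induction u) auto

lemma transpose_Suc_commute:
  "i + 2 \<le> j \<or> j + 2 \<le> i \<Longrightarrow>
   transpose i (Suc i) \<circ> transpose j (Suc j) = transpose j (Suc j) \<circ> transpose i (Suc i)"
  by (auto simp: fun_eq_iff transpose_def)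

lemma transpose_Suc_braid:
  "transpose i (Suc i) \<circ> transpose (Suc i) (Suc (Suc i)) \<circ> transpose i (Suc i) =
   transpose (Suc i) (Suc (Suc i)) \<circ> transpose i (Suc i) \<circ> transpose (Suc i) (Suc (Suc i))"
  by (auto simp: fun_eq_iff transpose_def)

lemma chiS_eq_if: "chiS S w = (if set w \<subseteq> S then (-1) ^ length w else 0)"
  by (induction w) (auto simp: chiS_def)

lemma bowtie_free_common_covers:
  assumes "bowtie_free P"
    and "covers_in P c e" "covers_in P c f" "covers_in P d e" "covers_in P d f"
  shows "c = d \<or> e = f"
proof (rule ccontr)
  assume "\<not> (c = d \<or> e = f)"
  with assms(2-5) have "distinct [e, f, c, d]"
    unfolding covers_in_def by auto
  with assms show False
    unfolding bowtie_free_def covers_in_def by blast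
qed

locale zero_hecke =
  fixes P :: "'a::order set" and bz tp :: 'a and n :: nat
    and U :: "nat \<Rightarrow> (nat \<Rightarrow> 'a) \<Rightarrow> (nat \<Rightarrow> 'a)"
  assumes hecke: "hecke_action P bz tp n U"
begin

abbreviation \<M> :: "(nat \<Rightarrow> 'a) set" where
  "\<M> \<equiv> maxchains P bz tp n"

lemma U_maxchain: "i \<in> {1..<n} \<Longrightarrow> m \<in> \<M> \<Longrightarrow> U i m \<in> \<M>"
  using hecke unfolding hecke_action_def Let_def by blast

lemma U_other: "i \<in> {1..<n} \<Longrightarrow> m \<in> \<M> \<Longrightarrow> k \<noteq> i \<Longrightarrow> U i m k = m k"
  using hecke unfolding hecke_action_def Let_def by blast

lemma U_idem: "i \<in> {1..<n} \<Longrightarrow> m \<in> \<M> \<Longrightarrow> U i (U i m) = U i m"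
  using hecke unfolding hecke_action_def Let_def by blast

lemma U_commute:
  "i \<in> {1..<n} \<Longrightarrow> j \<in> {1..<n} \<Longrightarrow> m \<in> \<M> \<Longrightarrow> i + 2 \<le> j \<or> j + 2 \<le> i \<Longrightarrow>
   U i (U j m) = U j (U i m)"
  using hecke unfolding hecke_action_def Let_def by blast

lemma U_braid:
  "i \<in> {1..<n} \<Longrightarrow> Suc i \<in> {1..<n} \<Longrightarrow> m \<in> \<M> \<Longrightarrow>
   U i (U (Suc i) (U i m)) = U (Suc i) (U i (U (Suc i) m))"
  using hecke unfolding hecke_action_def Let_def by blast

lemma U_eq_iff_at: "i \<in> {1..<n} \<Longrightarrow> m \<in> \<M> \<Longrightarrow> U i m = m \<longleftrightarrow> U i m i = m i"
  using U_other by (metis ext)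

lemma applyw_maxchain: "w \<in> lists {1..<n} \<Longrightarrow> m \<in> \<M> \<Longrightarrow> applyw U w m \<in> \<M>"
  by (induction w) (auto intro: U_maxchain)

lemma applyw_other:
  "w \<in> lists {1..<n} \<Longrightarrow> m \<in> \<M> \<Longrightarrow> k \<notin> set w \<Longrightarrow> applyw U w m k = m k"
  by (induction w) (auto simp: U_other applyw_maxchain)

lemma maxchain_covers: "m \<in> \<M> \<Longrightarrow> k < n \<Longrightarrow> covers_in P (m k) (m (Suc k))"
  unfolding maxchains_def sat_chain_def by blast

lemma finite_maxchains: "finite P \<Longrightarrow> finite \<M>"
  unfolding maxchains_def by (simp add: finite_PiE)

definition fixed_chains :: "nat list \<Rightarrow> (nat \<Rightarrow> 'a) set" where
  "fixed_chains w = {m \<in> \<M>. applyw U w m = m}"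

lemma applyw_distinct_fixed_imp_letters_fixed:
  "distinct w \<Longrightarrow> w \<in> lists {1..<n} \<Longrightarrow> m \<in> \<M> \<Longrightarrow> applyw U w m = m \<Longrightarrow> \<forall>j\<in>set w. U j m = m"
proof (induction w)
  case (Cons j v)
  define z where "z = applyw U v m"
  have j: "j \<in> {1..<n}" and v: "v \<in> lists {1..<n}" "j \<notin> set v"
    using Cons.prems by auto
  have z: "z \<in> \<M>" "U j z = m"
    using Cons.prems applyw_maxchain[OF v(1)] by (auto simp: z_def)
  have "U j m = m"
    using U_idem[OF j z(1)] z(2) by simp
  moreover have "z = m"
  proof
    fix k
    show "z k = m k"
      using applyw_other[OF v(1) Cons.prems(3) v(2)] U_other[OF j z(1), of k] z(2)
      by (cases "k = j") (auto simp: z_def)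
  qed
  ultimately show ?case
    using Cons v by (simp add: z_def)
qed simp

lemma fixed_chains_distinct:
  "distinct w \<Longrightarrow> w \<in> lists {1..<n} \<Longrightarrow> fixed_chains w = {m \<in> \<M>. \<forall>j\<in>set w. U j m = m}"
  unfolding fixed_chains_def
  by (auto dest: applyw_distinct_fixed_imp_letters_fixed intro: applyw_fixed_if_letters_fixed)

text \<open>The character of a good action is an integer combination of the characters \<open>\<chi>\<^sub>S\<close>,
  and \<open>\<chi>\<^sub>S(T\<^sub>w)\<close> depends on the word \<open>w\<close> only through its length and its set of letters.\<close>

lemma card_fixed_chains_letters:
  assumes "good_action P bz tp n U"
    and "w \<in> lists {1..<n}" "w' \<in> lists {1..<n}" "set w = set w'"
  shows "card (fixed_chains w) = card (fixed_chains w')"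
proof -
  obtain c where c: "\<forall>v\<in>lists {1..<n}. charP P bz tp n U v = (\<Sum>S\<in>Pow {1..<n}. c S * chiS S v)"
    using assms(1) unfolding good_action_def is_ch_def by blast
  have count: "int (card (fixed_chains v)) = (\<Sum>S\<in>Pow {1..<n}. if set v \<subseteq> S then c S else 0)"
    if "v \<in> lists {1..<n}" for v
  proof -
    have "(-1) ^ length v * int (card (fixed_chains v)) = (\<Sum>S\<in>Pow {1..<n}. c S * chiS S v)"
      using c that unfolding charP_def fixed_chains_def by simp
    also have "\<dots> = (-1) ^ length v * (\<Sum>S\<in>Pow {1..<n}. if set v \<subseteq> S then c S else 0)"
      unfolding chiS_eq_if sum_distrib_left by (rule sum.cong) auto
    finally show ?thesis
      by simp
  qed
  show ?thesis
    using count[OF assms(2)] count[OF assms(3)] assms(4) by simp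
qed

definition moves :: "((nat \<Rightarrow> 'a) \<times> (nat \<Rightarrow> 'a)) set" where
  "moves = {(U i x, x) | i x. x \<in> \<M> \<and> i \<in> {1..<n} \<and> U i x \<noteq> x}"

lemma moves_trancl_imp_restless:
  assumes "(y, x) \<in> moves\<^sup>+"
  shows "x \<in> \<M> \<and> (\<exists>w. w \<noteq> [] \<and> w \<in> lists {1..<n} \<and> restless U w x \<and> applyw U w x = y)"
  using assms
proof (induction rule: converse_trancl_induct)
  case (base y)
  then obtain i where "y = U i x" "x \<in> \<M>" "i \<in> {1..<n}" "U i x \<noteq> x"
    unfolding moves_def by blast
  then show ?case
    by (intro conjI exI[of _ "[i]"]) (auto simp: restless_Cons)
next
  case (step y z)
  then obtain w where w: "w \<noteq> []" "w \<in> lists {1..<n}" "restless U w x" "applyw U w x = z"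
    and "x \<in> \<M>" by blast
  moreover obtain i where "y = U i z" "i \<in> {1..<n}" "U i z \<noteq> z"
    using step(1) unfolding moves_def by blast
  ultimately show ?case
    by (intro conjI exI[of _ "i # w"]) (auto simp: restless_Cons)
qed

text \<open>A restless cycle through \<open>x\<close> would make \<open>x\<close> a fixed point of \<open>U\<^sub>w\<close> that is not fixed by
  all letters of \<open>w\<close>. But by the character condition \<open>U\<^sub>w\<close> has as many fixed points as
  \<open>U\<^bsub>remdups w\<^esub>\<close>, and a word with distinct letters only fixes chains fixed by each letter,
  because every \<open>U\<^sub>j\<close> changes rank \<open>j\<close> only.\<close>

lemma restless_not_cycle:
  assumes "good_action P bz tp n U" "finite P"
    and "x \<in> \<M>" "w \<noteq> []" "w \<in> lists {1..<n}" "restless U w x"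
  shows "applyw U w x \<noteq> x"
proof
  assume cycle: "applyw U w x = x"
  let ?C = "{m \<in> \<M>. \<forall>j\<in>set w. U j m = m}"
  have remdups_w: "remdups w \<in> lists {1..<n}"
    using assms(5) by (simp add: in_lists_conv_set)
  have C_eq: "fixed_chains (remdups w) = ?C"
    using fixed_chains_distinct[OF distinct_remdups remdups_w] unfolding set_remdups .
  have "?C \<subseteq> fixed_chains w"
    unfolding fixed_chains_def using applyw_fixed_if_letters_fixed[of w U] by blast
  moreover obtain u i where "w = u @ [i]"
    using assms(4) by (cases w rule: rev_cases) auto
  with assms(6) have "x \<notin> ?C"
    by (simp add: restless_snoc)
  moreover have "x \<in> fixed_chains w"
    using assms(3) cycle by (simp add: fixed_chains_def)
  ultimately have "?C \<subset> fixed_chains w"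
    by blast
  moreover have "finite (fixed_chains w)"
    using finite_maxchains[OF assms(2)] by (simp add: fixed_chains_def)
  ultimately have "card ?C < card (fixed_chains w)"
    by (rule psubset_card_mono[rotated])
  moreover have "card (fixed_chains w) = card (fixed_chains (remdups w))"
    using card_fixed_chains_letters[OF assms(1,5) remdups_w] by simp
  ultimately show False
    using C_eq by simp
qed

lemma wf_moves:
  assumes "good_action P bz tp n U" "finite P"
  shows "wf moves"
proof (rule finite_acyclic_wf)
  have "moves \<subseteq> \<M> \<times> \<M>"
    unfolding moves_def using U_maxchain by blast
  then show "finite moves"
    using finite_maxchains[OF assms(2)] by (meson finite_SigmaI finite_subset)
  show "acyclic moves"
    unfolding acyclic_def
  proof (intro allI notI)
    fix x
    assume "(x, x) \<in> moves\<^sup>+"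
    then obtain w where "x \<in> \<M>" "w \<noteq> []" "w \<in> lists {1..<n}" "restless U w x" "applyw U w x = x"
      using moves_trancl_imp_restless by blast
    then show False
      using restless_not_cycle[OF assms] by blast
  qed
qed

lemma restless_path_to_descent_free:
  assumes "wf moves" "x \<in> \<M>"
  shows "\<exists>t\<in>lists {1..<n}. restless U t x \<and> descents n U (applyw U t x) = {}"
  using assms
proof (induction x rule: wf_induct_rule)
  case (less x)
  show ?case
  proof (cases "descents n U x = {}")
    case True
    then show ?thesis
      by (intro bexI[of _ "[]"]) auto
  next
    case False
    then obtain i where i: "i \<in> {1..<n}" "U i x \<noteq> x"
      by (auto simp: descents_empty_iff)
    then have "(U i x, x) \<in> moves"
      unfolding moves_def using less.prems by blast
    then obtain t where "t \<in> lists {1..<n}" "restless U t (U i x)"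
      "descents n U (applyw U t (U i x)) = {}"
      using less.IH U_maxchain[OF i(1) less.prems] by blast
    with i show ?thesis
      by (intro bexI[of _ "t @ [i]"]) (simp_all add: restless_snoc applyw_append)
  qed
qed

end

locale bowtie_free_zero_hecke = zero_hecke +
  assumes bowtie: "bowtie_free P"
begin

text \<open>Record a chain by its entries \<open>(p, q)\<close> at ranks \<open>i\<close> and \<open>j = i + 1\<close>. Along the two sides
  of the braid relation, \<open>x, y, y1, z\<close> and \<open>x, y', y1', z\<close>, the entries are
  \<open>(p, q), (p', q), (p', q1), (p2, q1)\<close> and \<open>(p, q), (p, q'), (p2, q')\<close>, each pair a cover.
  Bowtie-freeness applied to these covers shows that the four steps following the first step
  on each side move.\<close>

lemma restless_braid_sides:
  assumes x: "x \<in> \<M>" and i: "i \<in> {1..<n}" "Suc i \<in> {1..<n}"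
    and moves_i: "U i x \<noteq> x" and moves_Suc_i: "U (Suc i) x \<noteq> x"
  shows "restless U [i, Suc i] (U i x) \<and> restless U [Suc i, i] (U (Suc i) x)"
proof -
  define j where "j = Suc i"
  define y where "y = U i x"
  define y1 where "y1 = U j y"
  define z where "z = U i y1"
  define y' where "y' = U j x"
  define y1' where "y1' = U i y'"
  have j: "j \<in> {1..<n}" "i \<noteq> j" "j \<noteq> i" and i_less: "i < n"
    using i by (auto simp: j_def)
  have chains: "y \<in> \<M>" "y1 \<in> \<M>" "z \<in> \<M>" "y' \<in> \<M>" "y1' \<in> \<M>"
    using x i(1) j(1) by (simp_all add: y_def y1_def z_def y'_def y1'_def U_maxchain)
  have braid: "U j y1' = z"
    using U_braid[OF i x] by (simp add: j_def y_def y1_def z_def y'_def y1'_def)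
  have entries: "y j = x j" "y1 i = y i" "z j = y1 j" "y' i = x i" "y1' j = y' j" "y1' i = z i"
    using U_other[OF i(1) x j(3)] U_other[OF j(1) chains(1) j(2)] U_other[OF i(1) chains(2) j(3)]
      U_other[OF j(1) x j(2)] U_other[OF i(1) chains(4) j(3)] U_other[OF j(1) chains(5) j(2)] braid
    by (simp_all add: y_def y1_def z_def y'_def y1'_def)
  have covers: "covers_in P (c i) (c j)" if "c \<in> \<M>" for c
    using maxchain_covers[OF that i_less] by (simp add: j_def)
  note common_covers = bowtie_free_common_covers[OF bowtie]
  have p': "y i \<noteq> x i" and q': "y' j \<noteq> x j"
    using U_eq_iff_at[OF i(1) x] U_eq_iff_at[OF j(1) x] moves_i moves_Suc_i
    by (simp_all add: y_def y'_def j_def)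
  have q1: "y1 j \<noteq> x j"
  proof
    assume q1_eq: "y1 j = x j"
    then have "z i = x i"
      using common_covers[of "z i" "x j" "y' j" "x i"] covers[OF chains(3)] covers[OF chains(5)]
        covers[OF x] covers[OF chains(4)] entries q' by auto
    moreover have "z k = x k" if "k \<noteq> i" "k \<noteq> j" for k
      using applyw_other[of "[i, j, i]" x k] x i(1) j(1) that
      by (simp add: z_def y1_def y_def)
    ultimately have "z = x"
      using q1_eq entries by (metis ext)
    then show False
      using U_idem[OF i(1) chains(2)] moves_i by (simp add: z_def)
  qed
  have p2: "z i \<noteq> x i"
    using common_covers[of "x i" "x j" "y1 j" "y i"] covers[OF x] covers[OF chains(1)]
      covers[OF chains(2)] covers[OF chains(3)] entries p' q1 by auto
  have no_cover: "\<not> covers_in P (y i) (y' j)"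
    using common_covers[of "x i" "x j" "y' j" "y i"] covers[OF x] covers[OF chains(4)]
      covers[OF chains(1)] entries p' q' by auto
  have "U j y \<noteq> y" "U i y1 \<noteq> y1" "U i y' \<noteq> y'" "U j y1' \<noteq> y1'"
    using q1 p2 no_cover covers[OF chains(2)] covers[OF chains(5)] entries
    by (auto simp: y1_def[symmetric] z_def[symmetric] y1'_def[symmetric] braid)
  then show ?thesis
    by (simp add: restless_Cons y_def y1_def y'_def y1'_def j_def)
qed

lemma restless_commute_side:
  assumes x: "x \<in> \<M>" and i: "i \<in> {1..<n}" and j: "j \<in> {1..<n}"
    and far: "i + 2 \<le> j \<or> j + 2 \<le> i" and moves_j: "U j x \<noteq> x"
  shows "restless U [j] (U i x)"
proof -
  have "j \<noteq> i"
    using far by auto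
  then have "U j (U i x) j = U j x j" "U i x j = x j"
    using U_commute[OF i j x far] U_other[OF i U_maxchain[OF j x]] U_other[OF i x] by simp_all
  moreover have "U j x j \<noteq> x j"
    using U_eq_iff_at[OF j x] moves_j by simp
  ultimately show ?thesis
    by (auto simp: restless_Cons)
qed

lemma restless_local_confluence:
  assumes x: "x \<in> \<M>" and i: "i \<in> {1..<n}" and j: "j \<in> {1..<n}"
    and moves: "U i x \<noteq> x" "U j x \<noteq> x"
  obtains vi vj where "vi \<in> lists {1..<n}" "vj \<in> lists {1..<n}"
    "restless U vi (U i x)" "restless U vj (U j x)"
    "applyw U (vi @ [i]) x = applyw U (vj @ [j]) x" "sperm (vi @ [i]) = sperm (vj @ [j])"
proof -
  consider "i = j" | "i + 2 \<le> j \<or> j + 2 \<le> i" | "j = Suc i" | "i = Suc j"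
    by linarith
  then show ?thesis
  proof cases
    case 1
    then show ?thesis
      using that[of "[]" "[]"] by simp
  next
    case 2
    then show ?thesis
      using that[of "[j]" "[i]"] i j restless_commute_side[OF x i j 2 moves(2)]
        restless_commute_side[OF x j i _ moves(1)] U_commute[OF i j x 2]
        transpose_Suc_commute[OF 2]
      by auto
  next
    case 3
    then have "restless U [i, j] (U i x) \<and> restless U [j, i] (U j x)"
      using restless_braid_sides[OF x i] j moves by simp
    then show ?thesis
      using that[of "[i, j]" "[j, i]"] 3 i j U_braid[OF i _ x] transpose_Suc_braid[of i]
      by (simp add: comp_assoc)
  next
    case 4
    then have "restless U [i, j] (U i x) \<and> restless U [j, i] (U j x)"
      using restless_braid_sides[OF x j] i moves by simp
    then show ?thesis
      using that[of "[i, j]" "[j, i]"] 4 i j U_braid[OF j _ x] transpose_Suc_braid[of j]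
      by (simp add: comp_assoc)
  qed
qed

lemma restless_continuations_join:
  assumes "wf moves" and x: "x \<in> \<M>" and i: "i \<in> {1..<n}" and j: "j \<in> {1..<n}"
    and moves: "U i x \<noteq> x" "U j x \<noteq> x"
  obtains si sj where "si \<in> lists {1..<n}" "sj \<in> lists {1..<n}"
    "restless U si (U i x)" "restless U sj (U j x)"
    "applyw U (si @ [i]) x = applyw U (sj @ [j]) x" "descents n U (applyw U (si @ [i]) x) = {}"
    "sperm (si @ [i]) = sperm (sj @ [j])"
proof -
  obtain vi vj where v: "vi \<in> lists {1..<n}" "vj \<in> lists {1..<n}"
    "restless U vi (U i x)" "restless U vj (U j x)"
    "applyw U (vi @ [i]) x = applyw U (vj @ [j]) x" "sperm (vi @ [i]) = sperm (vj @ [j])"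
    using restless_local_confluence[OF x i j moves] by blast
  have "applyw U (vi @ [i]) x \<in> \<M>"
    using applyw_maxchain v(1) i x by simp
  then obtain t where t: "t \<in> lists {1..<n}" "restless U t (applyw U (vi @ [i]) x)"
    "descents n U (applyw U t (applyw U (vi @ [i]) x)) = {}"
    using restless_path_to_descent_free[OF \<open>wf moves\<close>] by blast
  show ?thesis
    using that[of "t @ vi" "t @ vj"] t v
    by (simp add: restless_append applyw_append sperm_append comp_assoc)
qed

text \<open>Newman's lemma, keeping track of the permutation of the path.\<close>

lemma restless_descent_free_unique:
  assumes "wf moves" "x \<in> \<M>"
    and "w \<in> lists {1..<n}" "restless U w x" "descents n U (applyw U w x) = {}"
    and "w' \<in> lists {1..<n}" "restless U w' x" "descents n U (applyw U w' x) = {}"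
  shows "applyw U w x = applyw U w' x \<and> sperm w = sperm w'"
  using assms
proof (induction x arbitrary: w w' rule: wf_induct_rule)
  case (less x)
  show ?case
  proof (cases "descents n U x = {}")
    case True
    have "w = []" "w' = []"
      using restless_from_descent_free[OF True] less.prems by simp_all
    then show ?thesis
      by simp
  next
    case False
    then have "w \<noteq> []" "w' \<noteq> []"
      using less.prems by auto
    then obtain u i u' j where w: "w = u @ [i]" and w': "w' = u' @ [j]"
      by (metis rev_exhaust)
    have letters: "u \<in> lists {1..<n}" "i \<in> {1..<n}" "u' \<in> lists {1..<n}" "j \<in> {1..<n}"
      using less.prems w w' by auto
    have steps: "U i x \<noteq> x" "restless U u (U i x)" "U j x \<noteq> x" "restless U u' (U j x)"
      using less.prems w w' by (simp_all add: restless_snoc)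
    have ends: "descents n U (applyw U u (U i x)) = {}" "descents n U (applyw U u' (U j x)) = {}"
      using less.prems w w' by (simp_all add: applyw_append)
    have next_chains: "U i x \<in> \<M>" "U j x \<in> \<M>"
      using U_maxchain less.prems(1) letters by blast+
    have next_moves: "(U i x, x) \<in> moves" "(U j x, x) \<in> moves"
      unfolding moves_def using less.prems(1) letters steps by blast+
    obtain si sj where s: "si \<in> lists {1..<n}" "sj \<in> lists {1..<n}"
      "restless U si (U i x)" "restless U sj (U j x)"
      "applyw U (si @ [i]) x = applyw U (sj @ [j]) x" "descents n U (applyw U (si @ [i]) x) = {}"
      "sperm (si @ [i]) = sperm (sj @ [j])"
      by (rule restless_continuations_join[OF \<open>wf moves\<close> less.prems(1) letters(2,4) steps(1,3)])
    have join: "applyw U si (U i x) = applyw U sj (U j x)"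
      and si_end: "descents n U (applyw U si (U i x)) = {}"
      using s(5,6) by (simp_all add: applyw_append)
    then have sj_end: "descents n U (applyw U sj (U j x)) = {}"
      by simp
    have "applyw U u (U i x) = applyw U si (U i x) \<and> sperm u = sperm si"
      using less.IH[OF next_moves(1) next_chains(1) letters(1) steps(2) ends(1) s(1,3) si_end] .
    moreover have "applyw U u' (U j x) = applyw U sj (U j x) \<and> sperm u' = sperm sj"
      using less.IH[OF next_moves(2) next_chains(2) letters(3) steps(4) ends(2) s(2,4) sj_end] .
    ultimately show ?thesis
      using join s(7) w w' by (simp add: applyw_append sperm_append)
  qed
qed

end

theorem mainTheorem12:
  fixes P :: "'a::order set" and bz tp :: 'a and n :: nat
    and U :: "nat \<Rightarrow> (nat \<Rightarrow> 'a) \<Rightarrow> (nat \<Rightarrow> 'a)"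
    and m m0 :: "nat \<Rightarrow> 'a" and iw jw :: "nat list"
  assumes "graded_bounded P bz tp n"
    and "bowtie_free P"
    and "good_action P bz tp n U"
    and "m0 \<in> maxchains P bz tp n" and "descents n U m0 = {}"
    and "m \<in> maxchains P bz tp n"
    and "iw \<in> lists {1..<n}" and "jw \<in> lists {1..<n}"
    and "applyw U iw m = m0" and "restless U iw m"
    and "applyw U jw m = m0" and "restless U jw m"
  shows "sperm iw = sperm jw"
proof -
  interpret bowtie_free_zero_hecke P bz tp n U
    by unfold_locales (use assms(2,3) in \<open>simp_all add: good_action_def\<close>)
  have "wf moves"
    using wf_moves[OF assms(3)] assms(1) by (simp add: graded_bounded_def)
  moreover have "descents n U (applyw U iw m) = {}" "descents n U (applyw U jw m) = {}"
    using assms(5,9,11) by simp_all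
  ultimately show ?thesis
    using restless_descent_free_unique assms(6-8,10,12) by blast
qed

end
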